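(* Define, for integers $n,m,p\ge0$, $\mathcal{Z}_{n,m}(p)=\binom{m+p}{p}\sum_{k=0}^{m}s(m,k)\mathcal{B}_{n+k,p}$ and the polynomials $$\mathcal{Z}_{n,m}(x;p)=\sum_{k=0}^{n}\binom{n}{k}\mathcal{Z}_{k,m}(p)\,x^{n-k}.$$ Then for all integers $n,m,p\ge0$, $$\mathcal{Z}_{n+1,m}(x;p)=\frac{m+1}{m+p+1}\,\mathcal{Z}_{n,m+1}(x;p)+(m+x)\,\mathcal{Z}_{n,m}(x;p),$$ with $\mathcal{Z}_{0,m}(x;p)=1$.
   Context: $s(m,k)$ are the signed Stirling numbers of the first kind, defined by $x(x-1)\cdots(x-m+1)=\sum_{k=0}^m s(m,k)x^k$. For an integer $p\ge0$, the $p$-Bell numbers $\mathcal{B}_{n,p}$ are defined by $\sum_{n\ge0}\mathcal{B}_{n,p}\frac{z^n}{n!}=\sum_{n\ge0}\binom{n+p}{p}^{-1}\frac{(e^z-1)^n}{n!}$. *)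

theory Defs
  imports "HOL-Computational_Algebra.Formal_Power_Series" "HOL-Computational_Algebra.Polynomial"
begin

definition stirling1s :: "nat \<Rightarrow> nat \<Rightarrow> int" where
  "stirling1s m k = coeff (\<Prod>i<m. [:- of_nat i, 1:]) k"

text \<open>p-Bell numbers: n! times the n-th coefficient of
  sum_j binom(j+p,p)^(-1) (e^z-1)^j / j!.  Since (e^z - 1)^j has order j,
  only the terms j \<le> n contribute to the n-th coefficient, so the formal
  infinite sum is truncated exactly.\<close>
definition pBell :: "nat \<Rightarrow> nat \<Rightarrow> real" where
  "pBell n p = fact n *
     (\<Sum>j\<le>n. (1 / of_nat ((j + p) choose p)) * (1 / fact j) *
        fps_nth ((fps_exp (1::real) - 1) ^ j) n)"

definition Zc :: "nat \<Rightarrow> nat \<Rightarrow> nat \<Rightarrow> real" where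
  "Zc n m p = of_nat ((m + p) choose p) *
     (\<Sum>k\<le>m. of_int (stirling1s m k) * pBell (n + k) p)"

definition Zpoly :: "nat \<Rightarrow> nat \<Rightarrow> real \<Rightarrow> nat \<Rightarrow> real" where
  "Zpoly n m x p = (\<Sum>k\<le>n. of_nat (n choose k) * Zc k m p * x ^ (n - k))"

end

theory Submission
  imports Defs "HOL-Combinatorics.Stirling"
begin

(* Since (e^z - 1)^j / j! is the exponential generating function of the Stirling numbers
   of the second kind S(n,j), the p-Bell numbers are B_{n,p} = sum_j S(n,j) / binom(j+p,p).
   The orthogonality sum_k s(m,k) S(k,j) = [j = m] then gives Z_{0,m}(p) = 1, and the
   recurrence s(m+1,k) = s(m,k-1) - m s(m,k) gives
   Z_{n+1,m}(p) = (m+1)/(m+p+1) Z_{n,m+1}(p) + m Z_{n,m}(p).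
   Pascal's rule transfers this to the binomial convolutions Z_{n,m}(x;p), adding the
   term x Z_{n,m}(x;p). *)

lemma fps_exp_minus_one_power_Suc_nth:
  fixes E :: "'a::field_char_0 fps"
  defines "E \<equiv> fps_exp 1 - 1"
  shows "of_nat (Suc n) * fps_nth (E ^ Suc j) (Suc n)
           = of_nat (Suc j) * (fps_nth (E ^ Suc j) n + fps_nth (E ^ j) n)"
proof -
  have "fps_deriv E = E + 1"
    by (simp add: E_def)
  then have "fps_deriv (E ^ Suc j) = fps_const (of_nat (Suc j)) * (E ^ Suc j + E ^ j)"
    by (simp only: fps_deriv_power diff_Suc_1) (simp add: algebra_simps)
  from arg_cong[OF this, of "\<lambda>f. fps_nth f n"] show ?thesis
    by (simp only: fps_deriv_nth fps_mult_left_const_nth fps_add_nth Suc_eq_plus1)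
qed

lemma Stirling_eq_fps_exp_minus_one_power_nth:
  fixes E :: "'a::field_char_0 fps"
  defines "E \<equiv> fps_exp 1 - 1"
  shows "of_nat (Stirling n j) = fact n * (1 / fact j) * fps_nth (E ^ j) n"
proof (induction n arbitrary: j)
  case 0
  then show ?case by (cases j) (auto simp: E_def)
next
  case (Suc n)
  show ?case
  proof (cases j)
    case 0
    then show ?thesis by simp
  next
    case (Suc i)
    have "fact (Suc n) * (1 / fact (Suc i)) * fps_nth (E ^ Suc i) (Suc n)
        = fact n / fact (Suc i) * (of_nat (Suc n) * fps_nth (E ^ Suc i) (Suc n))"
      by (simp add: fact_Suc[of n] field_simps del: of_nat_Suc)
    also have "\<dots> = fact n / fact (Suc i) * (of_nat (Suc i) * (fps_nth (E ^ Suc i) n + fps_nth (E ^ i) n))"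
      unfolding E_def fps_exp_minus_one_power_Suc_nth ..
    also have "\<dots> = of_nat (Suc i) * (fact n * (1 / fact (Suc i)) * fps_nth (E ^ Suc i) n)
                      + fact n * (1 / fact i) * fps_nth (E ^ i) n"
      by (simp add: fact_Suc[of i] field_simps del: of_nat_Suc)
    also have "\<dots> = of_nat (Stirling (Suc n) (Suc i))"
      by (simp only: Suc.IH[symmetric] Stirling.simps of_nat_add of_nat_mult)
    finally show ?thesis
      using \<open>j = Suc i\<close> by simp
  qed
qed

lemma stirling1s_0_left: "stirling1s 0 k = (if k = 0 then 1 else 0)"
  by (simp add: stirling1s_def)

lemma stirling1s_Suc_0: "stirling1s (Suc m) 0 = - int m * stirling1s m 0"
  by (simp add: stirling1s_def algebra_simps)

lemma stirling1s_Suc_Suc: "stirling1s (Suc m) (Suc k) = stirling1s m k - int m * stirling1s m (Suc k)"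
  by (simp add: stirling1s_def algebra_simps)

lemma stirling1s_eq_0: "m < k \<Longrightarrow> stirling1s m k = 0"
proof (induction m arbitrary: k)
  case 0
  then show ?case by (simp add: stirling1s_0_left)
next
  case (Suc m)
  then obtain k' where "k = Suc k'" by (cases k) auto
  with Suc show ?case by (simp add: stirling1s_Suc_Suc)
qed

lemma sum_stirling1s_Suc:
  fixes f :: "nat \<Rightarrow> 'a::comm_ring_1"
  shows "(\<Sum>k\<le>Suc m. of_int (stirling1s (Suc m) k) * f k)
           = (\<Sum>k\<le>m. of_int (stirling1s m k) * f (Suc k)) - of_nat m * (\<Sum>k\<le>m. of_int (stirling1s m k) * f k)"
proof -
  have "(\<Sum>k\<le>m. of_int (stirling1s m k) * f k) = (\<Sum>k\<le>Suc m. of_int (stirling1s m k) * f k)"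
    by (simp add: stirling1s_eq_0)
  then show ?thesis
    by (simp only: sum.atMost_Suc_shift stirling1s_Suc_0 stirling1s_Suc_Suc)
      (simp add: algebra_simps sum_subtractf sum_distrib_left)
qed

lemma sum_stirling1s_Stirling:
  "(\<Sum>k\<le>m. of_int (stirling1s m k) * of_nat (Stirling k j)) = (if j = m then 1 else (0::'a::comm_ring_1))"
proof (induction m arbitrary: j)
  case 0
  then show ?case by (simp add: stirling1s_0_left)
next
  case (Suc m)
  show ?case
  proof (cases j)
    case 0
    then show ?thesis
      using Suc.IH[of 0] unfolding sum_stirling1s_Suc by simp
  next
    case (Suc i)
    have "(\<Sum>k\<le>m. of_int (stirling1s m k) * of_nat (Stirling (Suc k) (Suc i)))
        = of_nat (Suc i) * (\<Sum>k\<le>m. of_int (stirling1s m k) * of_nat (Stirling k (Suc i)))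
          + (\<Sum>k\<le>m. of_int (stirling1s m k) * (of_nat (Stirling k i) :: 'a))"
      by (simp add: algebra_simps sum.distrib sum_distrib_left)
    then show ?thesis
      using Suc Suc.IH[of i] Suc.IH[of "Suc i"] unfolding sum_stirling1s_Suc by auto
  qed
qed

lemma pBell_eq_sum_Stirling:
  assumes "n \<le> N"
  shows "pBell n p = (\<Sum>j\<le>N. real (Stirling n j) / real ((j + p) choose p))"
proof -
  have "pBell n p = (\<Sum>j\<le>n. real (Stirling n j) / real ((j + p) choose p))"
    unfolding pBell_def sum_distrib_left Stirling_eq_fps_exp_minus_one_power_nth
    by (simp add: field_simps)
  also have "\<dots> = (\<Sum>j\<le>N. real (Stirling n j) / real ((j + p) choose p))"
    using assms by (intro sum.mono_neutral_left) auto
  finally show ?thesis .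
qed

lemma sum_stirling1s_pBell: "(\<Sum>k\<le>m. of_int (stirling1s m k) * pBell k p) = 1 / real ((m + p) choose p)"
proof -
  have "(\<Sum>k\<le>m. of_int (stirling1s m k) * pBell k p)
      = (\<Sum>k\<le>m. \<Sum>j\<le>m. of_int (stirling1s m k) * real (Stirling k j) / real ((j + p) choose p))"
    by (simp add: pBell_eq_sum_Stirling[of _ m] sum_distrib_left)
  also have "\<dots> = (\<Sum>j\<le>m. (\<Sum>k\<le>m. of_int (stirling1s m k) * real (Stirling k j)) / real ((j + p) choose p))"
    by (subst sum.swap) (simp add: sum_divide_distrib)
  also have "\<dots> = 1 / real ((m + p) choose p)"
    by (simp add: sum_stirling1s_Stirling if_distrib[of "\<lambda>t. t / _"] cong: if_cong)
  finally show ?thesis .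
qed

lemma Zc_0_left: "Zc 0 m p = 1"
  by (simp add: Zc_def sum_stirling1s_pBell)

lemma real_binomial_Suc_ratio:
  "real (m + 1) / real (m + p + 1) * real ((m + 1 + p) choose p) = real ((m + p) choose p)"
proof -
  have "(m + 1) * ((m + 1 + p) choose p) = (m + p + 1) * ((m + p) choose p)"
    using binomial_absorb_comp[of "m + 1 + p" p] by simp
  then have "real (m + 1) * real ((m + 1 + p) choose p) = real (m + p + 1) * real ((m + p) choose p)"
    by (metis of_nat_mult)
  then show ?thesis
    by (simp add: field_simps)
qed

lemma Zc_Suc_left:
  "Zc (Suc n) m p = real (m + 1) / real (m + p + 1) * Zc n (m + 1) p + real m * Zc n m p"
proof -
  define W where "W n m = (\<Sum>k\<le>m. of_int (stirling1s m k) * pBell (n + k) p)" for n m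
  have Zc_W: "Zc n m p = real ((m + p) choose p) * W n m" for n m
    by (simp add: Zc_def W_def)
  have W_Suc: "W (Suc n) m = W n (Suc m) + real m * W n m"
    unfolding W_def sum_stirling1s_Suc by simp
  have "Zc (Suc n) m p = real ((m + p) choose p) * W n (Suc m) + real m * Zc n m p"
    by (simp add: Zc_W W_Suc algebra_simps)
  also have "real ((m + p) choose p) * W n (Suc m) = real (m + 1) / real (m + p + 1) * Zc n (m + 1) p"
    by (simp add: Zc_W mult.assoc flip: real_binomial_Suc_ratio)
  finally show ?thesis .
qed

lemma binomial_convolution_Suc:
  fixes c :: "nat \<Rightarrow> 'a::comm_ring_1"
  shows "(\<Sum>k\<le>Suc n. of_nat (Suc n choose k) * c k * x ^ (Suc n - k))
           = x * (\<Sum>k\<le>n. of_nat (n choose k) * c k * x ^ (n - k))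
             + (\<Sum>k\<le>n. of_nat (n choose k) * c (Suc k) * x ^ (n - k))"
proof -
  have "x * (\<Sum>k\<le>n. of_nat (n choose k) * c k * x ^ (n - k))
      = (\<Sum>k\<le>Suc n. of_nat (n choose k) * c k * x ^ (Suc n - k))"
    by (simp add: sum_distrib_left Suc_diff_le algebra_simps binomial_eq_0)
  also have "\<dots> = c 0 * x ^ Suc n + (\<Sum>k\<le>n. of_nat (n choose Suc k) * c (Suc k) * x ^ (n - k))"
    by (subst sum.atMost_Suc_shift) simp
  finally show ?thesis
    by (subst sum.atMost_Suc_shift) (simp add: sum.distrib algebra_simps)
qed

theorem mainTheorem14:
  fixes n m p :: nat and x :: real
  shows "Zpoly (n + 1) m x p =
           real (m + 1) / real (m + p + 1) * Zpoly n (m + 1) x p + (real m + x) * Zpoly n m x p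
         \<and> Zpoly 0 m x p = 1"
proof
  have "Zpoly (Suc n) m x p = x * Zpoly n m x p + (\<Sum>k\<le>n. real (n choose k) * Zc (Suc k) m p * x ^ (n - k))"
    unfolding Zpoly_def by (rule binomial_convolution_Suc)
  also have "(\<Sum>k\<le>n. real (n choose k) * Zc (Suc k) m p * x ^ (n - k))
      = real (m + 1) / real (m + p + 1) * Zpoly n (m + 1) x p + real m * Zpoly n m x p"
    unfolding Zpoly_def Zc_Suc_left by (simp add: sum_distrib_left sum.distrib algebra_simps)
  finally show "Zpoly (n + 1) m x p =
      real (m + 1) / real (m + p + 1) * Zpoly n (m + 1) x p + (real m + x) * Zpoly n m x p"
    by (simp add: algebra_simps)
  show "Zpoly 0 m x p = 1"
    by (simp add: Zpoly_def Zc_0_left)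
qed

end
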